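(* Let $(M,g)$ be a pseudo-Riemannian manifold, not conformally flat, with a vector field $A_i$ (non-zero at the points considered) such that $A_iC_{jklm}+A_jC_{kilm}+A_kC_{ijlm}=0$. Then $$C_{lmj}{}^kC_{pqk}{}^j=0\qquad\text{and}\qquad C_{lma}{}^bC_{pqb}{}^cC_{rsc}{}^dC_{tud}{}^a=0.$$
   Context: $(M,g)$ is a connected Hausdorff pseudo-Riemannian manifold of dimension $n\ge 3$ with Levi-Civita connection; indices raised/lowered with $g$, repeated indices summed. $R_{jklm}$ is the Riemann tensor, $R_{kl}=-R_{mkl}{}^m$, $R=R^m{}_m$, and the Weyl tensor is $$C_{jklm}=R_{jklm}+\tfrac{1}{n-2}\big(g_{mj}R_{kl}-g_{mk}R_{jl}+R_{mj}g_{kl}-R_{mk}g_{jl}\big)-\tfrac{R}{(n-1)(n-2)}\big(g_{mj}g_{kl}-g_{mk}g_{jl}\big).$$ *)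

theory Defs
  imports Complex_Main "HOL-Library.Cardinality"
begin

text \<open>Indices range over a finite type 'n
  (the coordinate indices of a chart / frame at a point), n = CARD('n).\<close>

type_synonym 'n tensor2 = "'n \<Rightarrow> 'n \<Rightarrow> real"
type_synonym 'n tensor4 = "'n \<Rightarrow> 'n \<Rightarrow> 'n \<Rightarrow> 'n \<Rightarrow> real"

text \<open>g is a (pseudo-Riemannian) metric at a point: symmetric, with inverse gi
  (gi is the contravariant metric g^{ij}); no signature restriction.\<close>
definition metric_pair :: "('n::finite) tensor2 \<Rightarrow> 'n tensor2 \<Rightarrow> bool" where
  "metric_pair g gi \<longleftrightarrow> (\<forall>i j. g i j = g j i) \<and>
     (\<forall>i j. (\<Sum>k\<in>UNIV. g i k * gi k j) = (if i = j then 1 else 0))"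

text \<open>Algebraic symmetries of the Riemann tensor of a Levi-Civita connection at a point.\<close>
definition curvature_tensor :: "('n::finite) tensor4 \<Rightarrow> bool" where
  "curvature_tensor R \<longleftrightarrow>
     (\<forall>j k l m. R j k l m = - R k j l m) \<and>
     (\<forall>j k l m. R j k l m = - R j k m l) \<and>
     (\<forall>j k l m. R j k l m = R l m j k) \<and>
     (\<forall>j k l m. R j k l m + R k l j m + R l j k m = 0)"

definition ricci :: "('n::finite) tensor2 \<Rightarrow> 'n tensor4 \<Rightarrow> 'n tensor2" where
  "ricci gi R k l = - (\<Sum>m\<in>UNIV. \<Sum>a\<in>UNIV. R m k l a * gi a m)"

definition scal :: "('n::finite) tensor2 \<Rightarrow> 'n tensor4 \<Rightarrow> real" where
  "scal gi R = (\<Sum>m\<in>UNIV. \<Sum>a\<in>UNIV. gi m a * ricci gi R a m)"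

definition weyl :: "('n::finite) tensor2 \<Rightarrow> 'n tensor2 \<Rightarrow> 'n tensor4 \<Rightarrow> 'n tensor4" where
  "weyl g gi R j k l m =
     (let n = real CARD('n); Ric = ricci gi R; S = scal gi R in
      R j k l m
      + (g m j * Ric k l - g m k * Ric j l + Ric m j * g k l - Ric m k * g j l) / (n - 2)
      - S / ((n - 1) * (n - 2)) * (g m j * g k l - g m k * g j l))"

definition raise4 :: "('n::finite) tensor2 \<Rightarrow> 'n tensor4 \<Rightarrow> 'n tensor4" where
  "raise4 gi C j k l m = (\<Sum>a\<in>UNIV. C j k l a * gi a m)"

end

theory Submission
  imports Defs
begin

text \<open>Contracting the cyclic identity with \<open>g\<^sup>k\<^sup>m\<close> and using that the Weyl tensor is
  trace-free gives \<open>A\<^sup>m C\<^sub>i\<^sub>j\<^sub>l\<^sub>m = 0\<close>. At an index \<open>i\<close> with \<open>A\<^sub>i \<noteq> 0\<close> the cyclic identity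
  then writes the matrix \<open>A\<^sub>i C\<^sub>l\<^sub>m\<^sub>j\<^sup>k\<close> (indices \<open>j, k\<close>) as \<open>A\<^sub>j X\<^sup>k + A\<^sup>k Y\<^sub>j\<close>.
  Every matrix \<open>C\<^sub>p\<^sub>q\<^sub>\<bullet>\<^sup>\<bullet>\<close> kills \<open>A\<^sub>j\<close> from the right and \<open>A\<^sup>k\<close> from the left, so the
  trace of any product starting with such a rank-two matrix vanishes.\<close>

lemma metric_pair_sym:
  assumes "metric_pair g gi" shows "g i j = g j i"
  using assms by (simp add: metric_pair_def)

lemma metric_pair_right_inverse:
  assumes "metric_pair g gi" shows "(\<Sum>k\<in>UNIV. g i k * gi k j) = of_bool (i = j)"
  using assms unfolding metric_pair_def of_bool_def by blast

lemma metric_pair_inverse_sym: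
  assumes mp: "metric_pair g gi" shows "gi i j = gi j i"
proof -
  have "gi i j = (\<Sum>k\<in>UNIV. (\<Sum>a\<in>UNIV. gi a i * g a k) * gi k j)"
    using metric_pair_right_inverse[OF mp] by (simp add: metric_pair_sym[OF mp] mult.commute)
  also have "\<dots> = (\<Sum>a\<in>UNIV. gi a i * (\<Sum>k\<in>UNIV. g a k * gi k j))"
    by (simp add: sum_distrib_left sum_distrib_right mult.assoc) (rule sum.swap)
  also have "\<dots> = gi j i"
    by (simp add: metric_pair_right_inverse[OF mp])
  finally show ?thesis .
qed

lemma metric_pair_left_inverse:
  assumes mp: "metric_pair g gi" shows "(\<Sum>k\<in>UNIV. gi i k * g k j) = of_bool (i = j)"
  using metric_pair_right_inverse[OF mp, of j i]
  by (simp add: metric_pair_sym[OF mp, of j] metric_pair_inverse_sym[OF mp, of _ i] mult.commute eq_commute)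

lemma ricci_sym:
  assumes mp: "metric_pair g gi" and R: "curvature_tensor R"
  shows "ricci gi R k l = ricci gi R l k"
proof -
  have "R m l k a * gi a m = R a k l m * gi m a" for m a
    using R metric_pair_inverse_sym[OF mp] unfolding curvature_tensor_def by metis
  then have "ricci gi R l k = - (\<Sum>m\<in>UNIV. \<Sum>a\<in>UNIV. R a k l m * gi m a)"
    unfolding ricci_def by simp
  also have "\<dots> = ricci gi R k l"
    unfolding ricci_def by (subst sum.swap) (rule refl)
  finally show ?thesis ..
qed

lemma weyl_antisym:
  assumes R: "curvature_tensor R"
  shows "weyl g gi R k j l m = - weyl g gi R j k l m"
proof -
  have "R k j l m = - R j k l m" using R unfolding curvature_tensor_def by metis
  then show ?thesis
    unfolding weyl_def Let_def by (simp add: algebra_simps diff_divide_distrib add_divide_distrib)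
qed

lemma weyl_pair_sym:
  assumes mp: "metric_pair g gi" and R: "curvature_tensor R"
  shows "weyl g gi R l m j k = weyl g gi R j k l m"
proof -
  have "R l m j k = R j k l m" using R unfolding curvature_tensor_def by metis
  moreover have "g l j = g j l" "g k m = g m k" "g l k = g k l" "g j m = g m j"
    by (simp_all add: metric_pair_sym[OF mp])
  moreover have "ricci gi R l j = ricci gi R j l" "ricci gi R k m = ricci gi R m k"
      "ricci gi R l k = ricci gi R k l" "ricci gi R j m = ricci gi R m j"
    by (simp_all add: ricci_sym[OF mp R])
  ultimately show ?thesis
    unfolding weyl_def Let_def by (simp add: algebra_simps)
qed

lemma contract_metric_lower:
  assumes mp: "metric_pair g gi"
  shows "(\<Sum>k\<in>UNIV. \<Sum>m\<in>UNIV. gi k m * (g m j * T k l)) = T j l"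
proof -
  have "(\<Sum>k\<in>UNIV. \<Sum>m\<in>UNIV. gi k m * (g m j * T k l))
      = (\<Sum>k\<in>UNIV. T k l * (\<Sum>m\<in>UNIV. gi k m * g m j))"
    by (simp add: sum_distrib_left algebra_simps)
  then show ?thesis by (simp add: metric_pair_left_inverse[OF mp])
qed

lemma contract_metric_upper:
  assumes mp: "metric_pair g gi"
  shows "(\<Sum>k\<in>UNIV. \<Sum>m\<in>UNIV. gi k m * (T m j * g k l)) = T l j"
proof -
  have reorder: "gi k m * (T m j * g k l) = T m j * (gi m k * g k l)" for k m
    using metric_pair_inverse_sym[OF mp, of k m] by simp
  have "(\<Sum>k\<in>UNIV. \<Sum>m\<in>UNIV. gi k m * (T m j * g k l))
      = (\<Sum>m\<in>UNIV. T m j * (\<Sum>k\<in>UNIV. gi m k * g k l))"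
    unfolding reorder sum_distrib_left by (rule sum.swap)
  then show ?thesis by (simp add: metric_pair_left_inverse[OF mp])
qed

lemma contract_metric_trace:
  fixes g gi :: "('n::finite) tensor2"
  assumes mp: "metric_pair g gi"
  shows "(\<Sum>k\<in>UNIV. \<Sum>m\<in>UNIV. gi k m * g m k) = real CARD('n)"
  by (simp add: metric_pair_left_inverse[OF mp])

lemma contract_curvature:
  assumes mp: "metric_pair g gi" and R: "curvature_tensor R"
  shows "(\<Sum>k\<in>UNIV. \<Sum>m\<in>UNIV. gi k m * R j k l m) = ricci gi R j l"
proof -
  have "gi k m * R j k l m = - (R k j l m * gi m k)" for k m
    using R metric_pair_inverse_sym[OF mp] unfolding curvature_tensor_def by (metis mult.commute mult_minus_left)
  then show ?thesis unfolding ricci_def by (simp add: sum_negf)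
qed

lemma contract_kulkarni_nomizu:
  fixes g gi :: "('n::finite) tensor2"
  assumes mp: "metric_pair g gi" and T_sym: "\<And>a b. T a b = T b a"
  shows "(\<Sum>k\<in>UNIV. \<Sum>m\<in>UNIV. gi k m *
      (g m j * T k l - g m k * T j l + T m j * g k l - T m k * g j l))
    = (2 - real CARD('n)) * T j l - (\<Sum>k\<in>UNIV. \<Sum>m\<in>UNIV. gi k m * T m k) * g j l"
proof -
  have "(\<Sum>k\<in>UNIV. \<Sum>m\<in>UNIV. gi k m *
      (g m j * T k l - g m k * T j l + T m j * g k l - T m k * g j l))
      = (\<Sum>k\<in>UNIV. \<Sum>m\<in>UNIV. gi k m * (g m j * T k l))
        - T j l * (\<Sum>k\<in>UNIV. \<Sum>m\<in>UNIV. gi k m * g m k)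
        + (\<Sum>k\<in>UNIV. \<Sum>m\<in>UNIV. gi k m * (T m j * g k l))
        - g j l * (\<Sum>k\<in>UNIV. \<Sum>m\<in>UNIV. gi k m * T m k)"
    by (simp add: algebra_simps sum.distrib sum_subtractf sum_distrib_left)
  then show ?thesis
    unfolding contract_metric_lower[OF mp] contract_metric_upper[OF mp] contract_metric_trace[OF mp]
    by (simp add: T_sym[of l j] algebra_simps)
qed

lemma contract_metric_product:
  fixes g gi :: "('n::finite) tensor2"
  assumes mp: "metric_pair g gi"
  shows "(\<Sum>k\<in>UNIV. \<Sum>m\<in>UNIV. gi k m * (g m j * g k l - g m k * g j l))
    = (1 - real CARD('n)) * g j l"
proof -
  have "(\<Sum>k\<in>UNIV. \<Sum>m\<in>UNIV. gi k m * (g m j * g k l - g m k * g j l))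
      = (\<Sum>k\<in>UNIV. \<Sum>m\<in>UNIV. gi k m * (g m j * g k l))
        - g j l * (\<Sum>k\<in>UNIV. \<Sum>m\<in>UNIV. gi k m * g m k)"
    by (simp add: algebra_simps sum_subtractf sum_distrib_left)
  then show ?thesis
    unfolding contract_metric_lower[OF mp] contract_metric_trace[OF mp] by (simp add: algebra_simps)
qed

lemma weyl_trace_free:
  fixes g gi :: "('n::finite) tensor2"
  assumes dim: "CARD('n) \<ge> 3" and mp: "metric_pair g gi" and R: "curvature_tensor R"
  shows "(\<Sum>k\<in>UNIV. \<Sum>m\<in>UNIV. gi k m * weyl g gi R j k l m) = 0"
proof -
  define n where "n = real CARD('n)"
  define Ric where "Ric = ricci gi R"
  define S where "S = scal gi R"
  define K where "K j k l m = g m j * Ric k l - g m k * Ric j l + Ric m j * g k l - Ric m k * g j l"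
    for j k l m
  define G where "G j k l m = g m j * g k l - g m k * g j l" for j k l m
  have weyl_eq: "weyl g gi R j k l m
      = R j k l m + K j k l m / (n - 2) - S / ((n - 1) * (n - 2)) * G j k l m" for k m
    unfolding weyl_def Let_def K_def G_def n_def Ric_def S_def ..
  have "(\<Sum>k\<in>UNIV. \<Sum>m\<in>UNIV. gi k m * weyl g gi R j k l m)
      = (\<Sum>k\<in>UNIV. \<Sum>m\<in>UNIV. gi k m * R j k l m)
        + (\<Sum>k\<in>UNIV. \<Sum>m\<in>UNIV. gi k m * K j k l m) / (n - 2)
        - S / ((n - 1) * (n - 2)) * (\<Sum>k\<in>UNIV. \<Sum>m\<in>UNIV. gi k m * G j k l m)"
    by (simp add: weyl_eq distrib_left right_diff_distrib sum.distrib sum_subtractf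
        sum_distrib_left sum_divide_distrib mult.left_commute)
  also have "\<dots> = Ric j l + ((2 - n) * Ric j l - S * g j l) / (n - 2)
      - S / ((n - 1) * (n - 2)) * ((1 - n) * g j l)"
    unfolding K_def G_def n_def Ric_def S_def
    by (simp add: contract_curvature[OF mp R] contract_metric_product[OF mp] scal_def
        contract_kulkarni_nomizu[where T="ricci gi R", OF mp ricci_sym[OF mp R]])
  also have "\<dots> = 0"
  proof -
    have "n - 2 \<noteq> 0" "(n - 1) * (n - 2) \<noteq> 0" using dim by (simp_all add: n_def)
    then show ?thesis by (simp add: field_simps)
  qed
  finally show ?thesis .
qed

lemma trace_mult_rank_two_eq_0:
  fixes X Y :: "'n::finite \<Rightarrow> 'n \<Rightarrow> real"
  assumes X: "\<And>a b. X a b = u a * E b + v b * F a"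
    and Y_u: "\<And>b. (\<Sum>a\<in>UNIV. Y b a * u a) = 0"
    and v_Y: "\<And>a. (\<Sum>b\<in>UNIV. v b * Y b a) = 0"
  shows "(\<Sum>a\<in>UNIV. \<Sum>b\<in>UNIV. X a b * Y b a) = 0"
proof -
  have "(\<Sum>a\<in>UNIV. \<Sum>b\<in>UNIV. u a * E b * Y b a) = (\<Sum>b\<in>UNIV. E b * (\<Sum>a\<in>UNIV. Y b a * u a))"
    by (subst sum.swap) (simp add: sum_distrib_left algebra_simps)
  moreover have "(\<Sum>a\<in>UNIV. \<Sum>b\<in>UNIV. v b * F a * Y b a) = (\<Sum>a\<in>UNIV. F a * (\<Sum>b\<in>UNIV. v b * Y b a))"
    by (simp add: sum_distrib_left algebra_simps)
  ultimately have "(\<Sum>a\<in>UNIV. \<Sum>b\<in>UNIV. X a b * Y b a)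
      = (\<Sum>b\<in>UNIV. E b * (\<Sum>a\<in>UNIV. Y b a * u a)) + (\<Sum>a\<in>UNIV. F a * (\<Sum>b\<in>UNIV. v b * Y b a))"
    by (simp add: X distrib_right sum.distrib)
  then show ?thesis by (simp add: Y_u v_Y)
qed

lemma matrix_mult_annihilates_right:
  fixes M N :: "'n::finite \<Rightarrow> 'n \<Rightarrow> real"
  assumes "\<And>c. (\<Sum>a\<in>UNIV. N c a * u a) = 0"
  shows "(\<Sum>a\<in>UNIV. (\<Sum>c\<in>UNIV. M b c * N c a) * u a) = 0"
proof -
  have "(\<Sum>a\<in>UNIV. (\<Sum>c\<in>UNIV. M b c * N c a) * u a) = (\<Sum>c\<in>UNIV. M b c * (\<Sum>a\<in>UNIV. N c a * u a))"
    by (simp add: sum_distrib_left sum_distrib_right mult.assoc) (rule sum.swap)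
  then show ?thesis by (simp add: assms)
qed

lemma matrix_mult_annihilates_left:
  fixes M N :: "'n::finite \<Rightarrow> 'n \<Rightarrow> real"
  assumes "\<And>c. (\<Sum>b\<in>UNIV. v b * M b c) = 0"
  shows "(\<Sum>b\<in>UNIV. v b * (\<Sum>c\<in>UNIV. M b c * N c a)) = 0"
proof -
  have "(\<Sum>b\<in>UNIV. v b * (\<Sum>c\<in>UNIV. M b c * N c a)) = (\<Sum>c\<in>UNIV. (\<Sum>b\<in>UNIV. v b * M b c) * N c a)"
    by (simp add: sum_distrib_left sum_distrib_right mult.assoc) (rule sum.swap)
  then show ?thesis by (simp add: assms)
qed

definition raise1 :: "('n::finite) tensor2 \<Rightarrow> ('n \<Rightarrow> real) \<Rightarrow> 'n \<Rightarrow> real" where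
  "raise1 gi w m = (\<Sum>k\<in>UNIV. w k * gi k m)"

locale weyl_type_tensor =
  fixes gi :: "('n::finite) tensor2" and W :: "'n tensor4"
  assumes inverse_metric_sym: "gi i j = gi j i"
    and antisym: "W k j l m = - W j k l m"
    and pair_sym: "W l m j k = W j k l m"
    and trace_free: "(\<Sum>k\<in>UNIV. \<Sum>m\<in>UNIV. gi k m * W j k l m) = 0"
begin

lemma antisym_last: "W j k m l = - W j k l m"
  by (metis antisym pair_sym)

context
  fixes w :: "'n \<Rightarrow> real"
  assumes cyclic: "\<And>i j k l m. w i * W j k l m + w j * W k i l m + w k * W i j l m = 0"
begin

lemma raise1_contract_last: "(\<Sum>m\<in>UNIV. raise1 gi w m * W i j l m) = 0"
proof -
  have "0 = (\<Sum>k\<in>UNIV. \<Sum>m\<in>UNIV. gi k m * (w i * W j k l m + w j * W k i l m + w k * W i j l m))"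
    by (simp add: cyclic)
  also have "\<dots> = w i * (\<Sum>k\<in>UNIV. \<Sum>m\<in>UNIV. gi k m * W j k l m)
      - w j * (\<Sum>k\<in>UNIV. \<Sum>m\<in>UNIV. gi k m * W i k l m)
      + (\<Sum>k\<in>UNIV. \<Sum>m\<in>UNIV. w k * gi k m * W i j l m)"
    by (simp add: antisym[of _ i] sum.distrib sum_subtractf sum_distrib_left algebra_simps)
  also have "\<dots> = (\<Sum>m\<in>UNIV. raise1 gi w m * W i j l m)"
    unfolding trace_free raise1_def by (simp add: sum_distrib_right) (rule sum.swap)
  finally show ?thesis ..
qed

lemma raise4_contract_vector: "(\<Sum>a\<in>UNIV. raise4 gi W q r b a * w a) = 0"
proof -
  have "(\<Sum>a\<in>UNIV. raise4 gi W q r b a * w a) = (\<Sum>a\<in>UNIV. \<Sum>x\<in>UNIV. w a * gi a x * W q r b x)"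
    unfolding raise4_def sum_distrib_right
    by (intro sum.cong refl) (simp add: sum_distrib_right inverse_metric_sym mult_ac)
  also have "\<dots> = (\<Sum>x\<in>UNIV. raise1 gi w x * W q r b x)"
    unfolding raise1_def sum_distrib_right by (rule sum.swap)
  finally show ?thesis by (simp add: raise1_contract_last)
qed

lemma raise1_contract_raise4: "(\<Sum>b\<in>UNIV. raise1 gi w b * raise4 gi W q r b a) = 0"
proof -
  have "raise1 gi w b * (W q r b x * gi x a) = - (gi x a * (raise1 gi w b * W q r x b))" for b x
    using antisym_last[of q r x b] by simp
  then have "(\<Sum>b\<in>UNIV. raise1 gi w b * raise4 gi W q r b a)
      = - (\<Sum>x\<in>UNIV. gi x a * (\<Sum>b\<in>UNIV. raise1 gi w b * W q r x b))"
    unfolding raise4_def sum_distrib_left by (subst sum.swap) (simp add: sum_negf)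
  then show ?thesis by (simp add: raise1_contract_last)
qed

lemma raise4_decomposition:
  "w i * raise4 gi W l m j k = w j * raise4 gi W l m i k + raise1 gi w k * W l m j i"
proof -
  have cyclic_raised: "w i * W l m j x = w j * W l m i x + w x * W l m j i" for x
    using cyclic[of i j x l m] pair_sym[of l m j x] pair_sym[of l m i x] pair_sym[of l m j i]
      antisym[of x i l m] antisym[of i j l m]
    by simp
  have "w i * raise4 gi W l m j k = (\<Sum>x\<in>UNIV. (w i * W l m j x) * gi x k)"
    unfolding raise4_def by (simp add: sum_distrib_left mult.assoc)
  also have "\<dots> = (\<Sum>x\<in>UNIV. (w j * W l m i x + w x * W l m j i) * gi x k)"
    unfolding cyclic_raised ..
  also have "\<dots> = w j * raise4 gi W l m i k + raise1 gi w k * W l m j i"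
    unfolding raise4_def raise1_def
    by (simp add: algebra_simps sum.distrib sum_distrib_left sum_distrib_right)
  finally show ?thesis .
qed

lemma raise4_square_trace_eq_0:
  assumes "w \<noteq> (\<lambda>_. 0)"
  shows "(\<Sum>j\<in>UNIV. \<Sum>k\<in>UNIV. raise4 gi W l m j k * raise4 gi W q r k j) = 0"
proof -
  obtain i where "w i \<noteq> 0" using assms by auto
  have "(\<Sum>j\<in>UNIV. \<Sum>k\<in>UNIV. (w i * raise4 gi W l m j k) * raise4 gi W q r k j) = 0"
    by (rule trace_mult_rank_two_eq_0[OF raise4_decomposition raise4_contract_vector raise1_contract_raise4])
  with \<open>w i \<noteq> 0\<close> show ?thesis
    by (simp add: sum_distrib_left[symmetric] mult.assoc)
qed

lemma raise4_fourth_power_trace_eq_0: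
  assumes "w \<noteq> (\<lambda>_. 0)"
  shows "(\<Sum>a\<in>UNIV. \<Sum>b\<in>UNIV. \<Sum>c\<in>UNIV. \<Sum>d\<in>UNIV.
    raise4 gi W l m a b * raise4 gi W q r b c * raise4 gi W s t c d * raise4 gi W u v d a) = 0"
proof -
  obtain i where "w i \<noteq> 0" using assms by auto
  have "(\<Sum>a\<in>UNIV. \<Sum>b\<in>UNIV. (w i * raise4 gi W l m a b) *
      (\<Sum>c\<in>UNIV. raise4 gi W q r b c * (\<Sum>d\<in>UNIV. raise4 gi W s t c d * raise4 gi W u v d a))) = 0"
    by (rule trace_mult_rank_two_eq_0[OF raise4_decomposition])
      (intro matrix_mult_annihilates_right raise4_contract_vector, intro matrix_mult_annihilates_left raise1_contract_raise4)
  with \<open>w i \<noteq> 0\<close> show ?thesis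
    by (simp add: sum_distrib_left[symmetric] mult.assoc)
qed

end

end

lemma weyl_type_tensor_weyl:
  fixes g gi :: "('n::finite) tensor2"
  assumes "CARD('n) \<ge> 3" and "metric_pair g gi" and "curvature_tensor R"
  shows "weyl_type_tensor gi (weyl g gi R)"
  by unfold_locales
    (rule metric_pair_inverse_sym[OF assms(2)] weyl_antisym[OF assms(3)]
      weyl_pair_sym[OF assms(2,3)] weyl_trace_free[OF assms])+

theorem mainTheorem10:
  fixes g gi :: "'p \<Rightarrow> ('n::finite) tensor2"
    and R :: "'p \<Rightarrow> 'n tensor4"
    and A :: "'p \<Rightarrow> 'n \<Rightarrow> real"
  assumes dim: "CARD('n) \<ge> 3"
    and met: "\<And>p. metric_pair (g p) (gi p)"
    and curv: "\<And>p. curvature_tensor (R p)"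
    and not_conf_flat: "\<exists>p j k l m. weyl (g p) (gi p) (R p) j k l m \<noteq> 0"
    and cyc: "\<And>p i j k l m.
        A p i * weyl (g p) (gi p) (R p) j k l m
      + A p j * weyl (g p) (gi p) (R p) k i l m
      + A p k * weyl (g p) (gi p) (R p) i j l m = 0"
  shows "\<forall>p. A p \<noteq> (\<lambda>_. 0) \<longrightarrow>
     (let C = raise4 (gi p) (weyl (g p) (gi p) (R p)) in
        (\<forall>l m q r. (\<Sum>j\<in>UNIV. \<Sum>k\<in>UNIV. C l m j k * C q r k j) = 0) \<and>
        (\<forall>l m q r s t u v.
           (\<Sum>a\<in>UNIV. \<Sum>b\<in>UNIV. \<Sum>c\<in>UNIV. \<Sum>d\<in>UNIV.
              C l m a b * C q r b c * C s t c d * C u v d a) = 0))"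
  using weyl_type_tensor.raise4_square_trace_eq_0[OF weyl_type_tensor_weyl[OF dim met curv] cyc]
    weyl_type_tensor.raise4_fourth_power_trace_eq_0[OF weyl_type_tensor_weyl[OF dim met curv] cyc]
  unfolding Let_def by blast

end
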